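(* Let $\lambda\ne0$, let $r\ge1$ and $a_1,\dots,a_r\ge1$ be integers, and let $G$ be the threshold graph with block sequence $0^{a_1}1^{a_2}0^{a_3}\cdots b_r^{a_r}$ and bags $B_1,\dots,B_r$. Define $p_i,\epsilon_i$ by: $p_i=0,\epsilon_i=0$ if $i\equiv1$; $p_i=\frac{\lambda(a_i-1)}{a_i},\epsilon_i=-\frac{\lambda}{a_i}$ if $i\equiv2$; $p_i=\lambda,\epsilon_i=0$ if $i\equiv3$; $p_i=\frac{\lambda}{a_i},\epsilon_i=\frac{\lambda}{a_i}$ if $i\equiv0\pmod4$. For $j$ even and $2\le i<j\le r$ set $\epsilon^{(1)}_{i,j}=\frac{\lambda}{\sqrt2^{\,j-i}}$ if $j\equiv2\pmod4$ and $\epsilon^{(1)}_{i,j}=\frac{-\lambda}{\sqrt2^{\,j-i}}$ if $j\equiv0\pmod4$; set $\epsilon^{(1)}_{1,2}=\lambda$ and $\epsilon^{(1)}_{1,j}=\epsilon^{(1)}_{2,j}$ for even $j$ with $4\le j\le r$. Let $M$ be the symmetric matrix indexed by $V(G)$ with $M_{vv}=p_i$ for $v\in B_i$; $M_{uv}=\epsilon_i$ for distinct $u,v\in B_i$, $i$ even; $M_{uv}=\epsilon^{(1)}_{i,j}/\sqrt{a_ia_j}$ for $u\in B_i,v\in B_j$, $i<j$, $j$ even; and $0$ otherwise. Then $M\in S(G)$, and writing $r=4k+q$ with $k\ge0$, $q\in\{0,1,2,3\}$, $A=\sum_{i\le r,\ i\equiv0,1\ (\mathrm{mod}\ 4)}(a_i-1)$,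 $B=\sum_{i\le r,\ i\equiv2,3\ (\mathrm{mod}\ 4)}(a_i-1)$, the spectrum of $M$ (with multiplicities in brackets) is: if $q=0$: $\{-\lambda^{[k]},0^{[A+k]},\lambda^{[B+k]},(2\lambda)^{[k]}\}$; if $q=1$: $\{-\lambda^{[k]},0^{[A+k+1]},\lambda^{[B+k]},(2\lambda)^{[k]}\}$; if $q=2$: $\{-\lambda^{[k+1]},0^{[A+k]},\lambda^{[B+k+1]},(2\lambda)^{[k]}\}$; if $q=3$: $\{-\lambda^{[k+1]},0^{[A+k]},\lambda^{[B+k+2]},(2\lambda)^{[k]}\}$.
   Context: Threshold graph with block sequence $0^{a_1}1^{a_2}0^{a_3}1^{a_4}\cdots b_r^{a_r}$ ($a_i\ge 1$, $b_i=0$ for $i$ odd and $b_i=1$ for $i$ even): its vertex set is partitioned into bags $B_1,\dots,B_r$ with $|B_i|=a_i$ (added in this order, the vertices of $B_i$ being added as isolated vertices if $i$ is odd and as dominating vertices if $i$ is even); two distinct vertices $u\in B_i$, $v\in B_j$ with $i\le j$ are adjacent if and only if $j$ is even. Every threshold graph has such a representation. For a simple graph $G$ on vertices $v_1,\dots,v_n$, $S(G)$ denotes the set of real symmetric $n\times n$ matrices whose off-diagonal entry $(i,j)$ is nonzero exactly when $\{v_i,v_j\}$ is an edge. A multiplicity $[0]$ means the eigenvalue does not occur. *)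

theory Defs
  imports "Jordan_Normal_Form.Char_Poly"
begin

text \<open>Block sequence given as a list a = [a_1,...,a_r]. Vertices are 0..<n with
 n = sum_list a; vertex v lies in bag B_i (1-based i) iff
 sum_list (take (i-1) a) \<le> v < sum_list (take i a).\<close>

definition nverts :: "nat list \<Rightarrow> nat" where
  "nverts a = sum_list a"

definition bag :: "nat list \<Rightarrow> nat \<Rightarrow> nat" where
  "bag a v = (LEAST i. v < sum_list (take i a))"

definition thr_adj :: "nat list \<Rightarrow> nat \<Rightarrow> nat \<Rightarrow> bool" where
  "thr_adj a u v = (u \<noteq> v \<and> even (max (bag a u) (bag a v)))"

definition in_S :: "nat \<Rightarrow> (nat \<Rightarrow> nat \<Rightarrow> bool) \<Rightarrow> real mat \<Rightarrow> bool" where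
  "in_S n E M = (M \<in> carrier_mat n n \<and> transpose_mat M = M \<and>
     (\<forall>i<n. \<forall>j<n. i \<noteq> j \<longrightarrow> (M $$ (i,j) \<noteq> 0 \<longleftrightarrow> E i j)))"

definition asz :: "nat list \<Rightarrow> nat \<Rightarrow> real" where
  "asz a i = real (a ! (i - 1))"

definition pdiag :: "real \<Rightarrow> nat list \<Rightarrow> nat \<Rightarrow> real" where
  "pdiag l a i = (if i mod 4 = 1 then 0
     else if i mod 4 = 2 then l * (asz a i - 1) / asz a i
     else if i mod 4 = 3 then l
     else l / asz a i)"

definition epsb :: "real \<Rightarrow> nat list \<Rightarrow> nat \<Rightarrow> real" where
  "epsb l a i = (if i mod 4 = 1 then 0
     else if i mod 4 = 2 then - l / asz a i
     else if i mod 4 = 3 then 0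
     else l / asz a i)"

text \<open>epsilon^(1)_{i,j}, meaningful for i < j, j even.\<close>
definition eps1 :: "real \<Rightarrow> nat \<Rightarrow> nat \<Rightarrow> real" where
  "eps1 l i j = (if i = 1 \<and> j = 2 then l
     else (let i' = max i 2 in
       if j mod 4 = 2 then l / sqrt 2 ^ (j - i') else - l / sqrt 2 ^ (j - i')))"

definition Mthr :: "real \<Rightarrow> nat list \<Rightarrow> real mat" where
  "Mthr l a = mat (nverts a) (nverts a) (\<lambda>(u,v).
     let i = bag a u; j = bag a v in
     if u = v then pdiag l a i
     else if i = j then (if even i then epsb l a i else 0)
     else if i < j then (if even j then eps1 l i j / sqrt (asz a i * asz a j) else 0)
     else (if even i then eps1 l j i / sqrt (asz a j * asz a i) else 0))"

end

theory Submission
  imports Defs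
begin

(* On vectors that are constant on every bag, rescaled by 1/sqrt a_i, M acts as l times a
   symmetric r x r quotient matrix Q; on vectors supported in a single bag B_i with zero sum
   it acts as the scalar p_i - epsilon_i, which is l for i = 2, 3 and 0 for i = 0, 1 (mod 4).
   Q has an explicit orthogonal eigenbasis: u_i = sqrt 2 ^ max i 2, and for every m >= 2 the
   vector equal to -u_i below m and to u_m at m.  The identity sum_{i<j} u_i^2 = u_j^2 makes
   these vectors orthogonal and turns the eigen-equations into telescoping sums; their
   eigenvalues are 0, -1, 1, 2 according to m mod 4, and 0 or 1 for u depending on r mod 4.
   Lifting them to M and adding Helmert contrasts inside each bag gives an orthogonal
   eigenbasis of M, so the characteristic polynomial splits into linear factors and the
   multiplicities are counts of residue classes mod 4. *)

lemma char_poly_eq_prod_if_orthogonal_eigenvectors: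
  fixes M :: "'a :: field mat" and vs :: "nat \<Rightarrow> 'a vec" and ev :: "nat \<Rightarrow> 'a"
  assumes M: "M \<in> carrier_mat n n"
    and dim: "\<And>w. w < n \<Longrightarrow> vs w \<in> carrier_vec n"
    and eigen: "\<And>w. w < n \<Longrightarrow> M *\<^sub>v vs w = ev w \<cdot>\<^sub>v vs w"
    and orth: "\<And>w w'. w < n \<Longrightarrow> w' < n \<Longrightarrow> w \<noteq> w' \<Longrightarrow> vs w \<bullet> vs w' = 0"
    and nonisotropic: "\<And>w. w < n \<Longrightarrow> vs w \<bullet> vs w \<noteq> 0"
  shows "char_poly M = (\<Prod>w\<leftarrow>[0..<n]. [:- ev w, 1:])"
proof -
  define P where "P = mat n n (\<lambda>(i,w). vs w $ i)"
  define P' where "P' = mat n n (\<lambda>(w,i). vs w $ i / (vs w \<bullet> vs w))"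
  define D where "D = mat n n (\<lambda>(i,j). if i = j then ev i else 0)"
  have P: "P \<in> carrier_mat n n" and P': "P' \<in> carrier_mat n n" and D: "D \<in> carrier_mat n n"
    by (auto simp: P_def P'_def D_def)
  have col_P: "col P w = vs w" if "w < n" for w
    using dim[OF that] that by (auto simp: P_def intro!: eq_vecI)
  have P'_P: "P' * P = 1\<^sub>m n"
  proof (rule eq_matI)
    fix i j assume "i < dim_row (1\<^sub>m n)" "j < dim_col (1\<^sub>m n)"
    hence i: "i < n" and j: "j < n" by auto
    have "(P' * P) $$ (i,j) = (vs i \<bullet> vs j) / (vs i \<bullet> vs i)"
      using i j P P' dim[OF i] dim[OF j] col_P[OF j]
      by (simp add: scalar_prod_def P'_def sum_divide_distrib)
    also have "\<dots> = 1\<^sub>m n $$ (i,j)"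
      using orth[OF i j] nonisotropic[OF i] i j by auto
    finally show "(P' * P) $$ (i,j) = 1\<^sub>m n $$ (i,j)" .
  qed (use P P' in auto)
  have P_P': "P * P' = 1\<^sub>m n" by (rule mat_mult_left_right_inverse[OF P' P P'_P])
  have MP: "M * P = P * D"
  proof (rule eq_matI)
    fix i j assume "i < dim_row (P * D)" "j < dim_col (P * D)"
    hence i: "i < n" and j: "j < n" using P D by auto
    have "(M * P) $$ (i,j) = (M *\<^sub>v vs j) $ i" using i j M P col_P[OF j] by auto
    also have "\<dots> = vs j $ i * ev j" using eigen[OF j] dim[OF j] i by (auto simp: mult.commute)
    also have "\<dots> = (\<Sum>k<n. vs k $ i * (if k = j then ev k else 0))"
      using j by (simp add: if_distrib[of "\<lambda>x. _ * x"] sum.delta cong: if_cong)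
    also have "\<dots> = (P * D) $$ (i,j)"
      using i j P D by (auto simp: scalar_prod_def P_def D_def col_def row_def atLeast0LessThan)
    finally show "(M * P) $$ (i,j) = (P * D) $$ (i,j)" .
  qed (use M P D in auto)
  have "M = P * D * P'"
    using M P P' by (metis MP P_P' assoc_mult_mat right_mult_one_mat)
  hence "similar_mat M D" by (intro similar_matI[of M D P P' n]) (use M P P' D P_P' P'_P in auto)
  hence "char_poly M = char_poly D" by (rule char_poly_similar)
  also have "\<dots> = (\<Prod>a\<leftarrow>diag_mat D. [:- a, 1:])"
    by (rule char_poly_upper_triangular[OF D]) (auto simp: upper_triangular_def D_def)
  also have "diag_mat D = map ev [0..<n]"
    by (auto simp: diag_mat_def D_def intro!: nth_equalityI)
  finally show ?thesis by (simp add: comp_def)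
qed

lemma order_prod_linear_factors:
  fixes ev :: "nat \<Rightarrow> 'a :: idom"
  shows "order x (\<Prod>w\<leftarrow>[0..<n]. [:- ev w, 1:]) = card {w. w < n \<and> ev w = x}"
proof (induction n)
  case 0
  then show ?case by (simp add: order_0I)
next
  case (Suc n)
  let ?p = "\<Prod>w\<leftarrow>[0..<n]. [:- ev w, 1:]"
  have "?p \<noteq> 0" by (auto simp: prod_list_zero_iff)
  hence "?p * [:- ev n, 1:] \<noteq> 0" by (rule no_zero_divisors) simp
  hence "order x (\<Prod>w\<leftarrow>[0..<Suc n]. [:- ev w, 1:]) = order x ?p + order x [:- ev n, 1:]"
    by (subst order_mult[symmetric]) simp_all
  also have "order x [:- ev n, 1:] = (if ev n = x then 1 else 0)"
    using order_power_n_n[of x 1] by (auto intro: order_0I)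
  also have "{w. w < Suc n \<and> ev w = x} = {w. w < n \<and> ev w = x} \<union> (if ev n = x then {n} else {})"
    by (auto simp: less_Suc_eq)
  ultimately show ?case by (simp add: Suc)
qed

lemma even_iff_mod_4: "even (j::nat) \<longleftrightarrow> j mod 4 = 0 \<or> j mod 4 = 2"
  by presburger

lemma sqrt2_power_sq: "sqrt 2 ^ k * sqrt 2 ^ k = (2::real) ^ k"
  by (simp add: power_mult_distrib[symmetric])

lemma card_residue_mod_4:
  assumes "\<rho> \<in> {1..4}"
  shows "card {i \<in> {1..r}. i mod 4 = \<rho> mod 4} = r div 4 + (if \<rho> \<le> r mod 4 then 1 else 0)"
proof (induction r)
  case 0
  show ?case using assms by simp
next
  case (Suc r)
  have "{i \<in> {1..Suc r}. i mod 4 = \<rho> mod 4}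
      = {i \<in> {1..r}. i mod 4 = \<rho> mod 4} \<union> (if Suc r mod 4 = \<rho> mod 4 then {Suc r} else {})"
    by (auto simp: le_Suc_eq)
  hence "card {i \<in> {1..Suc r}. i mod 4 = \<rho> mod 4}
      = r div 4 + (if \<rho> \<le> r mod 4 then 1 else 0) + (if Suc r mod 4 = \<rho> mod 4 then 1 else 0)"
    using Suc.IH by simp
  also have "\<dots> = Suc r div 4 + (if \<rho> \<le> Suc r mod 4 then 1 else 0)"
  proof -
    have "\<rho> \<in> {1, 2, 3, 4}" "r mod 4 \<in> {0, 1, 2, 3}" using assms by auto
    thus ?thesis by (auto simp: mod_Suc div_Suc)
  qed
  finally show ?case .
qed

section \<open>The quotient matrix\<close>

definition quot_base :: "nat \<Rightarrow> real" where
  "quot_base i = sqrt 2 ^ max i 2"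

definition sign_mod4 :: "nat \<Rightarrow> real" where
  "sign_mod4 j = (if j mod 4 = 2 then 1 else -1)"

(* l * quot_mat i j / sqrt (a_i * a_j) is the entry of M between bags i \<noteq> j, and l * quot_mat i i
   is p_i + (a_i - 1) * epsilon_i, the sum of a row of bag i over its own bag: l * quot_mat is the
   quotient matrix of the partition into bags, symmetrised by the factors sqrt a_i. *)
definition quot_mat :: "nat \<Rightarrow> nat \<Rightarrow> real" where
  "quot_mat i j =
     (if i = j then (if i mod 4 = 3 \<or> i mod 4 = 0 then 1 else 0)
      else if even (max i j) then sign_mod4 (max i j) * quot_base (min i j) / sqrt 2 ^ max i j
      else 0)"

definition quot_step :: "nat \<Rightarrow> nat \<Rightarrow> real" where
  "quot_step m i = (if i < m then - quot_base i else if i = m then sqrt 2 ^ m else 0)"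

definition quot_eigvec :: "nat \<Rightarrow> nat \<Rightarrow> real" where
  "quot_eigvec m = (if m = 1 then quot_base else quot_step m)"

definition quot_eigval :: "nat \<Rightarrow> nat \<Rightarrow> real" where
  "quot_eigval R m =
     (if m = 1 then (if R mod 4 = 2 \<or> R mod 4 = 3 then 1 else 0)
      else if m mod 4 = 1 then 0 else if m mod 4 = 2 then -1 else if m mod 4 = 3 then 1 else 2)"

lemma quot_eigval_eq_iff:
  "quot_eigval r i = c \<longleftrightarrow>
    (if i = 1 then c = (if r mod 4 = 2 \<or> r mod 4 = 3 then 1 else 0)
     else (i mod 4 = 1 \<and> c = 0) \<or> (i mod 4 = 2 \<and> c = -1) \<or> (i mod 4 = 3 \<and> c = 1) \<or> (i mod 4 = 0 \<and> c = 2))"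
proof -
  have "i mod 4 = 0 \<or> i mod 4 = 1 \<or> i mod 4 = 2 \<or> i mod 4 = 3" by arith
  then show ?thesis by (auto simp: quot_eigval_def)
qed

lemma quot_mat_sym: "quot_mat i j = quot_mat j i"
  by (simp add: quot_mat_def max.commute min.commute)

lemma quot_mat_less:
  "i < j \<Longrightarrow> quot_mat j i = (if even j then sign_mod4 j * quot_base i / sqrt 2 ^ j else 0)"
  by (simp add: quot_mat_def max_def min_def)

lemma sum_quot_base_sq:
  assumes "2 \<le> j"
  shows "(\<Sum>i\<in>{1..<j}. quot_base i * quot_base i) = 2 ^ j"
  using assms
proof (induction j rule: dec_induct)
  case base
  show ?case by (simp add: quot_base_def sqrt2_power_sq numeral_2_eq_2)
next
  case (step j)
  have "{1..<Suc j} = insert j {1..<j}" using step by auto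
  with step show ?case by (simp add: quot_base_def sqrt2_power_sq)
qed

lemma sum_quot_mat_base_below:
  assumes "2 \<le> j" "j \<le> m"
  shows "(\<Sum>i\<in>{1..<j}. quot_mat m i * quot_base i)
    = (if even m then sign_mod4 m * 2 ^ j / sqrt 2 ^ m else 0)"
proof -
  have "(\<Sum>i\<in>{1..<j}. quot_mat m i * quot_base i)
      = (\<Sum>i\<in>{1..<j}. (if even m then sign_mod4 m / sqrt 2 ^ m else 0) * (quot_base i * quot_base i))"
    using assms by (intro sum.cong) (auto simp: quot_mat_less)
  also have "\<dots> = (if even m then sign_mod4 m / sqrt 2 ^ m else 0) * 2 ^ j"
    by (simp only: sum_distrib_left[symmetric] sum_quot_base_sq[OF assms(1)])
  finally show ?thesis by simp
qed

lemma quot_mat_base_eigen: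
  assumes "1 \<le> j" "j \<le> R"
  shows "(\<Sum>i\<in>{1..R}. quot_mat j i * quot_base i) = quot_eigval R 1 * quot_base j"
  using assms(2)
proof (induction R rule: dec_induct)
  case base
  show ?case
  proof (cases "j = 1")
    case True
    then show ?thesis by (simp add: quot_mat_def quot_eigval_def)
  next
    case False
    hence j: "2 \<le> j" using assms by auto
    have "{1..j} = insert j {1..<j}" using assms by auto
    hence "(\<Sum>i\<in>{1..j}. quot_mat j i * quot_base i)
        = quot_mat j j * quot_base j + (\<Sum>i\<in>{1..<j}. quot_mat j i * quot_base i)"
      by simp
    also have "\<dots> = ((if j mod 4 = 3 \<or> j mod 4 = 0 then 1 else 0) + (if even j then sign_mod4 j else 0))
        * sqrt 2 ^ j"
      using sum_quot_mat_base_below[OF j order_refl] j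
      by (simp add: quot_mat_def quot_base_def max_def sqrt2_power_sq[symmetric] algebra_simps)
    also have "\<dots> = quot_eigval j 1 * quot_base j"
      using j by (auto simp: quot_base_def max_def sign_mod4_def quot_eigval_def even_iff_mod_4)
    finally show ?thesis .
  qed
next
  case (step R)
  have "2 \<le> Suc R" using step assms by simp
  hence "quot_base (Suc R) = sqrt 2 ^ Suc R" by (simp add: quot_base_def)
  hence step_term: "quot_mat j (Suc R) * quot_base (Suc R)
      = (if even (Suc R) then sign_mod4 (Suc R) else 0) * quot_base j"
    using step by (simp add: quot_mat_sym[of j] quot_mat_less)
  have "(\<Sum>i\<in>{1..Suc R}. quot_mat j i * quot_base i)
      = (\<Sum>i\<in>{1..R}. quot_mat j i * quot_base i) + quot_mat j (Suc R) * quot_base (Suc R)"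
    by simp
  also have "\<dots> = (quot_eigval R 1 + (if even (Suc R) then sign_mod4 (Suc R) else 0)) * quot_base j"
    by (simp only: step.IH step_term distrib_right)
  also have "quot_eigval R 1 + (if even (Suc R) then sign_mod4 (Suc R) else 0) = quot_eigval (Suc R) 1"
    by (auto simp: quot_eigval_def sign_mod4_def even_iff_mod_4 mod_Suc)
  finally show ?case .
qed

lemma sum_times_quot_step:
  assumes "2 \<le> m" "m \<le> R"
  shows "(\<Sum>i\<in>{1..R}. f i * quot_step m i) = f m * sqrt 2 ^ m - (\<Sum>i\<in>{1..<m}. f i * quot_base i)"
proof -
  have "(\<Sum>i\<in>{1..R}. f i * quot_step m i) = (\<Sum>i\<in>insert m {1..<m}. f i * quot_step m i)"
    using assms by (intro sum.mono_neutral_right) (auto simp: quot_step_def)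
  also have "\<dots> = f m * sqrt 2 ^ m - (\<Sum>i\<in>{1..<m}. f i * quot_base i)"
    by (simp add: quot_step_def sum_negf)
  finally show ?thesis .
qed

lemma quot_mat_step_eigen:
  assumes m: "2 \<le> m" "m \<le> R" and j: "1 \<le> j"
  shows "(\<Sum>i\<in>{1..R}. quot_mat j i * quot_step m i) = quot_eigval R m * quot_step m j"
proof -
  have sum: "(\<Sum>i\<in>{1..R}. quot_mat j i * quot_step m i)
      = quot_mat j m * sqrt 2 ^ m - (\<Sum>i\<in>{1..<m}. quot_mat j i * quot_base i)"
    by (rule sum_times_quot_step[OF m])
  consider "j < m" | "j = m" | "m < j" by linarith
  then show ?thesis
  proof cases
    case 1
    have "{1..<m} = {1..m - 1}" using m by auto
    hence "(\<Sum>i\<in>{1..<m}. quot_mat j i * quot_base i) = quot_eigval (m - 1) 1 * quot_base j"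
      using quot_mat_base_eigen[of j "m - 1"] 1 j by simp
    moreover have "quot_mat j m * sqrt 2 ^ m = (if even m then sign_mod4 m else 0) * quot_base j"
      using 1 by (simp add: quot_mat_sym[of j] quot_mat_less)
    moreover have "quot_eigval (m - 1) 1 = quot_eigval R m + (if even m then sign_mod4 m else 0)"
      using m by (cases m) (auto simp: quot_eigval_def sign_mod4_def even_iff_mod_4 mod_Suc)
    moreover have "quot_step m j = - quot_base j" using 1 by (simp add: quot_step_def)
    ultimately show ?thesis using sum by (simp add: algebra_simps)
  next
    case 2
    have "(\<Sum>i\<in>{1..<m}. quot_mat j i * quot_base i) = (if even m then sign_mod4 m * sqrt 2 ^ m else 0)"
      using sum_quot_mat_base_below[OF m(1) order_refl] 2
      by (simp add: sqrt2_power_sq[symmetric])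
    moreover have "quot_mat j m = (if m mod 4 = 3 \<or> m mod 4 = 0 then 1 else 0)"
      using 2 by (simp add: quot_mat_def)
    moreover have "quot_step m j = sqrt 2 ^ m" using 2 by (simp add: quot_step_def)
    ultimately show ?thesis using sum m
      by (auto simp: quot_eigval_def sign_mod4_def even_iff_mod_4)
  next
    case 3
    have "(\<Sum>i\<in>{1..<m}. quot_mat j i * quot_base i) = quot_mat j m * sqrt 2 ^ m"
      using sum_quot_mat_base_below[OF m(1)] 3 m
      by (simp add: quot_mat_less quot_base_def max_def sqrt2_power_sq[symmetric])
    then show ?thesis using sum 3 by (simp add: quot_step_def)
  qed
qed

lemma quot_base_step_orth:
  assumes "2 \<le> m" "m \<le> R"
  shows "(\<Sum>i\<in>{1..R}. quot_base i * quot_step m i) = 0"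
  using sum_times_quot_step[OF assms, of quot_base] sum_quot_base_sq[OF assms(1)] assms(1)
  by (simp add: quot_base_def max_def sqrt2_power_sq)

lemma quot_mat_eigen:
  assumes "1 \<le> m" "m \<le> R" "1 \<le> j" "j \<le> R"
  shows "(\<Sum>i\<in>{1..R}. quot_mat j i * quot_eigvec m i) = quot_eigval R m * quot_eigvec m j"
  using assms quot_mat_base_eigen[of j R] quot_mat_step_eigen[of m R j]
  by (auto simp: quot_eigvec_def)

lemma quot_eigvec_orth:
  assumes "1 \<le> m" "m \<le> R" "1 \<le> m'" "m' \<le> R" "m \<noteq> m'"
  shows "(\<Sum>i\<in>{1..R}. quot_eigvec m i * quot_eigvec m' i) = 0"
proof -
  have less: "(\<Sum>i\<in>{1..R}. quot_eigvec m i * quot_eigvec m' i) = 0"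
    if "1 \<le> m" "m < m'" "m' \<le> R" for m m'
  proof (cases "m = 1")
    case True
    then show ?thesis using quot_base_step_orth[of m' R] that by (simp add: quot_eigvec_def)
  next
    case False
    \<comment> \<open>on the support of the earlier step vector the later one agrees with \<open>- quot_base\<close>\<close>
    have "quot_step m i * quot_step m' i = - (quot_base i * quot_step m i)" for i
      using that by (auto simp: quot_step_def)
    then show ?thesis
      using quot_base_step_orth[of m R] False that by (simp add: quot_eigvec_def sum_negf)
  qed
  show ?thesis
    using assms less[of m m'] less[of m' m] by (cases "m < m'") (simp_all add: mult.commute)
qed

section \<open>Bags\<close>

definition bag_start :: "nat list \<Rightarrow> nat \<Rightarrow> nat" where
  "bag_start a j = sum_list (take j a)"

(* Bags are indexed from 1 as in bag, so B_i = bag_verts a i starts at bag_start a (i - 1). *)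
definition bag_verts :: "nat list \<Rightarrow> nat \<Rightarrow> nat set" where
  "bag_verts a i = {bag_start a (i - 1)..<bag_start a i}"

lemma finite_bag_verts [simp]: "finite (bag_verts a i)"
  by (simp add: bag_verts_def)

lemma bag_start_Suc: "j < length a \<Longrightarrow> bag_start a (Suc j) = bag_start a j + a ! j"
  by (simp add: bag_start_def take_Suc_conv_app_nth)

lemma bag_start_mono: "i \<le> j \<Longrightarrow> bag_start a i \<le> bag_start a j"
proof (rule lift_Suc_mono_le[of "bag_start a"])
  show "bag_start a n \<le> bag_start a (Suc n)" for n
    using bag_start_Suc[of n a] by (cases "n < length a") (auto simp: bag_start_def)
qed

lemma bag_start_length: "bag_start a (length a) = nverts a"
  by (simp add: bag_start_def nverts_def)

lemma bag_start_le_nverts: "bag_start a j \<le> nverts a"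
proof (cases "j \<le> length a")
  case True
  then show ?thesis using bag_start_mono[OF True, of a] by (simp add: bag_start_length)
next
  case False
  then show ?thesis by (simp add: bag_start_def nverts_def)
qed

lemma bag_verts_subset: "bag_verts a i \<subseteq> {..<nverts a}"
  using bag_start_le_nverts[of a i] by (auto simp: bag_verts_def)

lemma card_bag_verts:
  assumes "i \<in> {1..length a}"
  shows "card (bag_verts a i) = a ! (i - 1)"
proof -
  have "i - 1 < length a" "Suc (i - 1) = i" using assms by auto
  thus ?thesis using bag_start_Suc[of "i - 1" a] by (simp add: bag_verts_def)
qed

lemma bag_bounds:
  assumes "v < nverts a"
  shows "bag a v \<in> {1..length a}" "v \<in> bag_verts a (bag a v)"
proof -
  have ex: "v < bag_start a (length a)" using assms by (simp add: bag_start_length)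
  have less: "v < bag_start a (bag a v)"
    unfolding bag_def bag_start_def[symmetric] by (rule LeastI[of _ "length a"]) (use ex in auto)
  have le: "bag a v \<le> length a"
    unfolding bag_def bag_start_def[symmetric] by (rule Least_le) (use ex in auto)
  have pos: "1 \<le> bag a v" using less by (cases "bag a v") (auto simp: bag_start_def)
  have "bag_start a (bag a v - 1) \<le> v"
  proof (rule ccontr)
    assume "\<not> bag_start a (bag a v - 1) \<le> v"
    hence "bag a v \<le> bag a v - 1"
      unfolding bag_def bag_start_def[symmetric] by (intro Least_le) simp
    thus False using pos by simp
  qed
  thus "bag a v \<in> {1..length a}" "v \<in> bag_verts a (bag a v)"
    using less le pos by (auto simp: bag_verts_def)
qed

lemma bag_eqI:
  assumes "i \<in> {1..length a}" "v \<in> bag_verts a i"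
  shows "bag a v = i"
  unfolding bag_def bag_start_def[symmetric]
proof (rule Least_equality)
  show "v < bag_start a i" using assms by (simp add: bag_verts_def)
  show "i \<le> j" if "v < bag_start a j" for j
  proof (rule ccontr)
    assume "\<not> i \<le> j"
    hence "bag_start a j \<le> bag_start a (i - 1)" by (intro bag_start_mono) simp
    thus False using assms that by (simp add: bag_verts_def)
  qed
qed

lemma sum_by_bags: "(\<Sum>v<nverts a. f v) = (\<Sum>i\<in>{1..length a}. \<Sum>v\<in>bag_verts a i. f v)"
proof -
  have "(\<Sum>v<bag_start a k. f v) = (\<Sum>i\<in>{1..k}. \<Sum>v\<in>bag_verts a i. f v)" for k
  proof (induction k)
    case (Suc k)
    have "bag_start a k \<le> bag_start a (Suc k)" by (rule bag_start_mono) simp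
    hence "(\<Sum>v<bag_start a (Suc k). f v)
        = (\<Sum>v\<in>{0..<bag_start a k}. f v) + (\<Sum>v\<in>bag_verts a (Suc k). f v)"
      by (simp add: bag_verts_def sum.atLeastLessThan_concat flip: atLeast0LessThan)
    then show ?case using Suc by (simp add: atLeast0LessThan)
  qed (simp add: bag_start_def)
  from this[of "length a"] show ?thesis by (simp add: bag_start_length)
qed

lemma sum_by_bags_weighted:
  fixes g f :: "nat \<Rightarrow> 'b :: semiring_0"
  shows "(\<Sum>v<nverts a. g (bag a v) * f v) = (\<Sum>i\<in>{1..length a}. g i * (\<Sum>v\<in>bag_verts a i. f v))"
proof -
  have "(\<Sum>v\<in>bag_verts a i. g (bag a v) * f v) = g i * (\<Sum>v\<in>bag_verts a i. f v)"
    if "i \<in> {1..length a}" for i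
    using that by (simp add: bag_eqI sum_distrib_left)
  then show ?thesis unfolding sum_by_bags by (rule sum.cong[OF refl])
qed

lemma asz_pos: "\<forall>x\<in>set a. x \<ge> 1 \<Longrightarrow> i \<in> {1..length a} \<Longrightarrow> asz a i > 0"
  unfolding asz_def using nth_mem[of "i - 1" a] by fastforce

section \<open>Eigenvectors of the matrix\<close>

definition Mthr_offdiag :: "real \<Rightarrow> nat list \<Rightarrow> nat \<Rightarrow> nat \<Rightarrow> real" where
  "Mthr_offdiag l a i j =
     (if i = j then epsb l a i else l * quot_mat i j / sqrt (asz a i * asz a j))"

lemma eps1_eq_quot_mat:
  assumes "1 \<le> i" "i < j" "even j"
  shows "eps1 l i j = l * quot_mat i j"
proof -
  have "max i 2 \<le> j" using assms by presburger
  hence "sqrt 2 ^ (j - max i 2) = sqrt 2 ^ j / sqrt 2 ^ max i 2"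
    by (simp add: power_diff)
  thus ?thesis
    using assms by (auto simp: eps1_def quot_mat_sym[of i] quot_mat_less sign_mod4_def quot_base_def
        even_iff_mod_4 Let_def)
qed

lemma Mthr_entry:
  assumes "u < nverts a" "v < nverts a"
  shows "Mthr l a $$ (u,v)
    = (if u = v then pdiag l a (bag a u) else Mthr_offdiag l a (bag a u) (bag a v))"
proof -
  have "1 \<le> bag a u" "1 \<le> bag a v" using assms bag_bounds by auto
  thus ?thesis
    using assms unfolding Mthr_def Mthr_offdiag_def Let_def
    by (auto simp: epsb_def even_iff_mod_4 eps1_eq_quot_mat quot_mat_def mult.commute)
qed

lemma Mthr_in_S:
  assumes pos: "\<forall>x\<in>set a. x \<ge> 1" and l: "l \<noteq> 0"
  shows "in_S (nverts a) (thr_adj a) (Mthr l a)"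
  unfolding in_S_def
proof (intro conjI allI impI)
  show carrier: "Mthr l a \<in> carrier_mat (nverts a) (nverts a)" by (simp add: Mthr_def)
  have "Mthr_offdiag l a i j = Mthr_offdiag l a j i" for i j
    by (simp add: Mthr_offdiag_def quot_mat_sym mult.commute)
  thus "transpose_mat (Mthr l a) = Mthr l a"
    using carrier by (intro eq_matI) (auto simp: Mthr_entry)
  fix u v assume u: "u < nverts a" and v: "v < nverts a" and "u \<noteq> v"
  have "asz a (bag a u) > 0" "asz a (bag a v) > 0" using asz_pos[OF pos] bag_bounds u v by auto
  moreover have "quot_mat i j \<noteq> 0 \<longleftrightarrow> even (max i j)" if "i \<noteq> j" for i j
    using that by (auto simp: quot_mat_def sign_mod4_def quot_base_def)
  ultimately show "Mthr l a $$ (u, v) \<noteq> 0 \<longleftrightarrow> thr_adj a u v"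
    using u v \<open>u \<noteq> v\<close> l
    by (auto simp: Mthr_entry Mthr_offdiag_def thr_adj_def epsb_def even_iff_mod_4)
qed

lemma Mthr_mult_vec:
  assumes u: "u < nverts a" and x: "x \<in> carrier_vec (nverts a)"
  shows "(Mthr l a *\<^sub>v x) $ u = (pdiag l a (bag a u) - epsb l a (bag a u)) * x $ u
     + (\<Sum>i\<in>{1..length a}. Mthr_offdiag l a (bag a u) i * (\<Sum>v\<in>bag_verts a i. x $ v))"
proof -
  let ?m = "bag a u"
  have "(Mthr l a *\<^sub>v x) $ u = (\<Sum>v<nverts a. Mthr l a $$ (u,v) * x $ v)"
    using u x by (simp add: Mthr_def scalar_prod_def row_def atLeast0LessThan)
  also have "\<dots> = (\<Sum>v<nverts a. (if v = u then pdiag l a ?m - epsb l a ?m else 0) * x $ v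
      + Mthr_offdiag l a ?m (bag a v) * x $ v)"
    by (intro sum.cong refl) (auto simp: Mthr_entry u Mthr_offdiag_def algebra_simps)
  also have "\<dots> = (pdiag l a ?m - epsb l a ?m) * x $ u + (\<Sum>v<nverts a. Mthr_offdiag l a ?m (bag a v) * x $ v)"
    using u by (simp add: sum.distrib if_distrib[of "\<lambda>z. z * _"] sum.delta cong: if_cong)
  finally show ?thesis by (simp only: sum_by_bags_weighted)
qed

lemma sum_bag_verts_vec: "(\<Sum>v\<in>bag_verts a i. vec (nverts a) f $ v) = (\<Sum>v\<in>bag_verts a i. f v)"
  using bag_verts_subset[of a i] by (intro sum.cong) auto

definition contrast_eigval :: "nat \<Rightarrow> real" where
  "contrast_eigval i = (if i mod 4 = 2 \<or> i mod 4 = 3 then 1 else 0)"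

lemma contrast_eigval_eq_iff:
  "contrast_eigval i = c \<longleftrightarrow> (c = 0 \<and> (i mod 4 = 0 \<or> i mod 4 = 1)) \<or> (c = 1 \<and> (i mod 4 = 2 \<or> i mod 4 = 3))"
  using mod_less_divisor[of 4 i] by (auto simp: contrast_eigval_def)

lemma pdiag_minus_epsb: "asz a i > 0 \<Longrightarrow> pdiag l a i - epsb l a i = l * contrast_eigval i"
  by (auto simp: pdiag_def epsb_def contrast_eigval_def field_simps)

lemma pdiag_bag_row_sum: "asz a i > 0 \<Longrightarrow> pdiag l a i + (asz a i - 1) * epsb l a i = l * quot_mat i i"
  by (auto simp: pdiag_def epsb_def quot_mat_def field_simps)

definition bag_lift :: "nat list \<Rightarrow> (nat \<Rightarrow> real) \<Rightarrow> nat \<Rightarrow> real" where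
  "bag_lift a g v = g (bag a v) / sqrt (asz a (bag a v))"

lemma sum_bag_lift:
  assumes "i \<in> {1..length a}"
  shows "(\<Sum>v\<in>bag_verts a i. bag_lift a g v) = sqrt (asz a i) * g i"
proof -
  have "(\<Sum>v\<in>bag_verts a i. bag_lift a g v) = asz a i * (g i / sqrt (asz a i))"
    using assms by (simp add: bag_lift_def bag_eqI card_bag_verts asz_def)
  also have "\<dots> = sqrt (asz a i) * g i"
    by (metis real_div_sqrt asz_def of_nat_0_le_iff times_divide_eq_left times_divide_eq_right mult.commute)
  finally show ?thesis .
qed

lemma Mthr_offdiag_rescaled:
  assumes m: "asz a m > 0" and i: "asz a i > 0"
  shows "Mthr_offdiag l a m i * (sqrt (asz a i) * x)
    = (l * quot_mat m i * x + (if i = m then (asz a m * epsb l a m - l * quot_mat m m) * x else 0))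
      / sqrt (asz a m)"
proof (cases "i = m")
  case True
  then show ?thesis using m by (simp add: Mthr_offdiag_def field_simps)
next
  case False
  have "sqrt (asz a m * asz a i) = sqrt (asz a m) * sqrt (asz a i)" by (simp add: real_sqrt_mult)
  then show ?thesis using False m i by (simp add: Mthr_offdiag_def field_simps)
qed

lemma Mthr_mult_bag_lift:
  assumes pos: "\<forall>x\<in>set a. x \<ge> 1"
  shows "Mthr l a *\<^sub>v vec (nverts a) (bag_lift a g)
    = vec (nverts a) (bag_lift a (\<lambda>j. l * (\<Sum>i\<in>{1..length a}. quot_mat j i * g i)))"
proof (rule eq_vecI)
  fix u assume "u < dim_vec (vec (nverts a) (bag_lift a (\<lambda>j. l * (\<Sum>i\<in>{1..length a}. quot_mat j i * g i))))"
  hence u: "u < nverts a" by simp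
  define m where "m = bag a u"
  have m: "m \<in> {1..length a}" using bag_bounds[OF u] by (simp add: m_def)
  define s where "s = sqrt (asz a m)"
  have s: "s > 0" using asz_pos[OF pos m] by (simp add: s_def)
  have offdiag: "Mthr_offdiag l a m i * (sqrt (asz a i) * g i)
      = (l * quot_mat m i * g i + (if i = m then (asz a m * epsb l a m - l * quot_mat m m) * g m else 0)) / s"
    if "i \<in> {1..length a}" for i
    using Mthr_offdiag_rescaled[OF asz_pos[OF pos m] asz_pos[OF pos that], of l]
    by (cases "i = m") (simp_all add: s_def)
  have "vec (nverts a) (bag_lift a g) $ u = g m / s" using u by (simp add: bag_lift_def m_def s_def)
  moreover have "(\<Sum>v\<in>bag_verts a i. vec (nverts a) (bag_lift a g) $ v) = sqrt (asz a i) * g i"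
    if "i \<in> {1..length a}" for i
    using that by (simp add: sum_bag_verts_vec sum_bag_lift)
  ultimately have "(Mthr l a *\<^sub>v vec (nverts a) (bag_lift a g)) $ u
      = (pdiag l a m - epsb l a m) * (g m / s)
        + (\<Sum>i\<in>{1..length a}. Mthr_offdiag l a m i * (sqrt (asz a i) * g i))"
    using u by (simp add: Mthr_mult_vec m_def)
  also have "(\<Sum>i\<in>{1..length a}. Mthr_offdiag l a m i * (sqrt (asz a i) * g i))
      = (\<Sum>i\<in>{1..length a}. (l * quot_mat m i * g i
          + (if i = m then (asz a m * epsb l a m - l * quot_mat m m) * g m else 0)) / s)"
    by (rule sum.cong[OF refl offdiag])
  also have "\<dots> = (l * (\<Sum>i\<in>{1..length a}. quot_mat m i * g i)
      + (asz a m * epsb l a m - l * quot_mat m m) * g m) / s"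
    using m by (simp add: sum_divide_distrib[symmetric] sum.distrib sum_distrib_left mult.assoc)
  also have "(pdiag l a m - epsb l a m) * (g m / s) + \<dots>
      = ((pdiag l a m + (asz a m - 1) * epsb l a m - l * quot_mat m m) * g m
        + l * (\<Sum>i\<in>{1..length a}. quot_mat m i * g i)) / s"
    using s by (simp add: field_simps)
  also have "\<dots> = l * (\<Sum>i\<in>{1..length a}. quot_mat m i * g i) / s"
    using pdiag_bag_row_sum asz_pos[OF pos m] by simp
  also have "\<dots> = vec (nverts a) (bag_lift a (\<lambda>j. l * (\<Sum>i\<in>{1..length a}. quot_mat j i * g i))) $ u"
    using u by (simp add: bag_lift_def m_def s_def)
  finally show "(Mthr l a *\<^sub>v vec (nverts a) (bag_lift a g)) $ u = \<dots>" .
qed (simp add: Mthr_def)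

definition bag_offset :: "nat list \<Rightarrow> nat \<Rightarrow> nat" where
  "bag_offset a v = v - bag_start a (bag a v - 1)"

definition bag_contrast :: "nat list \<Rightarrow> nat \<Rightarrow> nat \<Rightarrow> real" where
  "bag_contrast a w v =
     (if bag a v = bag a w \<and> v < w then 1 else if v = w then - real (bag_offset a w) else 0)"

lemma bag_contrast_nonzero_bag: "bag_contrast a w v \<noteq> 0 \<Longrightarrow> bag a v = bag a w"
  by (auto simp: bag_contrast_def split: if_splits)

lemma sum_bag_contrast:
  assumes w: "w < nverts a" and i: "i \<in> {1..length a}"
  shows "(\<Sum>v\<in>bag_verts a i. bag_contrast a w v) = 0"
proof (cases "bag a w = i")
  case False
  then show ?thesis using i by (auto simp: bag_contrast_def bag_eqI intro!: sum.neutral)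
next
  case True
  have w_in: "w \<in> bag_verts a i" using bag_bounds[OF w] True by simp
  have "(\<Sum>v\<in>bag_verts a i. bag_contrast a w v)
      = (\<Sum>v\<in>bag_verts a i. (if v < w then 1 else 0) + (if v = w then - real (bag_offset a w) else 0))"
    using True i by (intro sum.cong refl) (auto simp: bag_contrast_def bag_eqI)
  also have "\<dots> = real (card (bag_verts a i \<inter> {v. v < w})) - real (bag_offset a w)"
    using w_in by (simp add: sum.distrib sum.If_cases)
  also have "bag_verts a i \<inter> {v. v < w} = {bag_start a (i - 1)..<w}"
    using w_in by (auto simp: bag_verts_def)
  finally show ?thesis using True by (simp add: bag_offset_def)
qed

lemma sum_bag_contrast_total: "w < nverts a \<Longrightarrow> (\<Sum>v<nverts a. bag_contrast a w v) = 0"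
  by (simp add: sum_by_bags sum_bag_contrast)

lemma Mthr_mult_bag_contrast:
  assumes pos: "\<forall>x\<in>set a. x \<ge> 1" and w: "w < nverts a"
  shows "Mthr l a *\<^sub>v vec (nverts a) (bag_contrast a w)
    = (l * contrast_eigval (bag a w)) \<cdot>\<^sub>v vec (nverts a) (bag_contrast a w)"
proof (rule eq_vecI)
  fix u assume "u < dim_vec ((l * contrast_eigval (bag a w)) \<cdot>\<^sub>v vec (nverts a) (bag_contrast a w))"
  hence u: "u < nverts a" by simp
  have "(Mthr l a *\<^sub>v vec (nverts a) (bag_contrast a w)) $ u
      = (pdiag l a (bag a u) - epsb l a (bag a u)) * bag_contrast a w u"
    using u w by (simp add: Mthr_mult_vec sum_bag_verts_vec sum_bag_contrast)
  also have "\<dots> = l * contrast_eigval (bag a w) * bag_contrast a w u"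
  proof (cases "bag_contrast a w u = 0")
    case False
    then show ?thesis
      using bag_contrast_nonzero_bag[OF False] asz_pos[OF pos] bag_bounds[OF u] pdiag_minus_epsb by simp
  qed simp
  finally show "(Mthr l a *\<^sub>v vec (nverts a) (bag_contrast a w)) $ u
      = ((l * contrast_eigval (bag a w)) \<cdot>\<^sub>v vec (nverts a) (bag_contrast a w)) $ u"
    using u by simp
qed (simp add: Mthr_def)

lemma bag_lift_inner:
  assumes pos: "\<forall>x\<in>set a. x \<ge> 1"
  shows "(\<Sum>v<nverts a. bag_lift a g v * bag_lift a h v) = (\<Sum>i\<in>{1..length a}. g i * h i)"
proof -
  have "asz a (bag a v) > 0" if "v < nverts a" for v
    using asz_pos[OF pos bag_bounds(1)[OF that]] .
  hence "(\<Sum>v<nverts a. bag_lift a g v * bag_lift a h v)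
      = (\<Sum>v<nverts a. (g (bag a v) * h (bag a v) / asz a (bag a v)) * 1)"
    by (intro sum.cong refl) (simp add: bag_lift_def less_imp_le)
  also have "\<dots> = (\<Sum>i\<in>{1..length a}. g i * h i / asz a i * real (card (bag_verts a i)))"
    by (subst sum_by_bags_weighted[where g = "\<lambda>i. g i * h i / asz a i"]) simp
  also have "\<dots> = (\<Sum>i\<in>{1..length a}. g i * h i)"
    using asz_pos[OF pos] by (intro sum.cong refl) (simp add: card_bag_verts asz_def)
  finally show ?thesis .
qed

lemma bag_lift_contrast_orth:
  "w < nverts a \<Longrightarrow> (\<Sum>v<nverts a. bag_lift a g v * bag_contrast a w v) = 0"
  unfolding bag_lift_def
  by (subst sum_by_bags_weighted[where g = "\<lambda>i. g i / sqrt (asz a i)"]) (simp add: sum_bag_contrast)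

lemma bag_contrast_orth:
  assumes w: "w < nverts a" and less: "w < w'"
  shows "(\<Sum>v<nverts a. bag_contrast a w v * bag_contrast a w' v) = 0"
proof (cases "bag a w = bag a w'")
  case True
  have "bag_contrast a w' v = 1" if "bag_contrast a w v \<noteq> 0" for v
  proof -
    have "v \<le> w"
    proof (rule ccontr)
      assume "\<not> v \<le> w"
      hence "bag_contrast a w v = 0" by (simp add: bag_contrast_def)
      with that show False by simp
    qed
    thus ?thesis using bag_contrast_nonzero_bag[OF that] True less by (simp add: bag_contrast_def)
  qed
  hence pointwise: "bag_contrast a w v * bag_contrast a w' v = bag_contrast a w v" for v
    by (cases "bag_contrast a w v = 0") auto
  have "(\<Sum>v<nverts a. bag_contrast a w v * bag_contrast a w' v) = (\<Sum>v<nverts a. bag_contrast a w v)"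
    by (simp only: pointwise)
  also have "\<dots> = 0" by (rule sum_bag_contrast_total[OF w])
  finally show ?thesis .
next
  case False
  have pointwise: "bag_contrast a w v * bag_contrast a w' v = 0" for v
    using False bag_contrast_nonzero_bag[of a w v] bag_contrast_nonzero_bag[of a w' v]
    by (metis mult_eq_0_iff)
  show ?thesis by (simp only: pointwise sum.neutral_const)
qed

definition Mthr_eigvec :: "nat list \<Rightarrow> nat \<Rightarrow> nat \<Rightarrow> real" where
  "Mthr_eigvec a w =
     (if bag_offset a w = 0 then bag_lift a (quot_eigvec (bag a w)) else bag_contrast a w)"

definition Mthr_eigval :: "real \<Rightarrow> nat list \<Rightarrow> nat \<Rightarrow> real" where
  "Mthr_eigval l a w = l *
     (if bag_offset a w = 0 then quot_eigval (length a) (bag a w) else contrast_eigval (bag a w))"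

lemma Mthr_eigvec_eigen:
  assumes pos: "\<forall>x\<in>set a. x \<ge> 1" and w: "w < nverts a"
  shows "Mthr l a *\<^sub>v vec (nverts a) (Mthr_eigvec a w)
    = Mthr_eigval l a w \<cdot>\<^sub>v vec (nverts a) (Mthr_eigvec a w)"
proof (cases "bag_offset a w = 0")
  case True
  define m where "m = bag a w"
  have m: "m \<in> {1..length a}" using bag_bounds[OF w] by (simp add: m_def)
  have "Mthr l a *\<^sub>v vec (nverts a) (bag_lift a (quot_eigvec m))
      = vec (nverts a) (bag_lift a (\<lambda>j. l * (\<Sum>i\<in>{1..length a}. quot_mat j i * quot_eigvec m i)))"
    by (rule Mthr_mult_bag_lift[OF pos])
  also have "\<dots> = (l * quot_eigval (length a) m) \<cdot>\<^sub>v vec (nverts a) (bag_lift a (quot_eigvec m))"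
  proof (rule eq_vecI)
    fix u assume "u < dim_vec ((l * quot_eigval (length a) m) \<cdot>\<^sub>v vec (nverts a) (bag_lift a (quot_eigvec m)))"
    hence u: "u < nverts a" by simp
    then show "vec (nverts a) (bag_lift a (\<lambda>j. l * (\<Sum>i\<in>{1..length a}. quot_mat j i * quot_eigvec m i))) $ u
        = ((l * quot_eigval (length a) m) \<cdot>\<^sub>v vec (nverts a) (bag_lift a (quot_eigvec m))) $ u"
      using quot_mat_eigen[of m "length a" "bag a u"] m bag_bounds(1)[OF u] by (simp add: bag_lift_def)
  qed simp
  finally show ?thesis using True by (simp add: Mthr_eigvec_def Mthr_eigval_def m_def)
next
  case False
  then show ?thesis using Mthr_mult_bag_contrast[OF pos w] by (simp add: Mthr_eigvec_def Mthr_eigval_def)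
qed

lemma bag_offset_eq_0_iff:
  assumes "w < nverts a"
  shows "bag_offset a w = 0 \<longleftrightarrow> w = bag_start a (bag a w - 1)"
  using bag_bounds(2)[OF assms] by (auto simp: bag_offset_def bag_verts_def)

lemma Mthr_eigvec_orth:
  assumes pos: "\<forall>x\<in>set a. x \<ge> 1" and w: "w < nverts a" and w': "w' < nverts a" and "w \<noteq> w'"
  shows "(\<Sum>v<nverts a. Mthr_eigvec a w v * Mthr_eigvec a w' v) = 0"
proof -
  have contrast_lift: "(\<Sum>v<nverts a. bag_contrast a x v * bag_lift a g v) = 0"
    if "x < nverts a" for x g
    using bag_lift_contrast_orth[OF that, of g] by (simp add: mult.commute)
  consider "bag_offset a w = 0" "bag_offset a w' = 0" | "bag_offset a w \<noteq> 0 \<or> bag_offset a w' \<noteq> 0"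
    by blast
  then show ?thesis
  proof cases
    case 1
    hence "bag a w \<noteq> bag a w'"
      using \<open>w \<noteq> w'\<close> bag_offset_eq_0_iff[OF w] bag_offset_eq_0_iff[OF w'] by metis
    then show ?thesis
      using 1 bag_lift_inner[OF pos] quot_eigvec_orth[of "bag a w" "length a" "bag a w'"]
        bag_bounds(1)[OF w] bag_bounds(1)[OF w']
      by (simp add: Mthr_eigvec_def)
  next
    case 2
    have "(\<Sum>v<nverts a. bag_contrast a w v * bag_contrast a w' v) = 0"
      using bag_contrast_orth[OF w, of w'] bag_contrast_orth[OF w', of w] \<open>w \<noteq> w'\<close>
      by (cases "w < w'") (simp_all add: mult.commute)
    then show ?thesis
      using 2 bag_lift_contrast_orth[OF w'] contrast_lift[OF w]
      by (auto simp: Mthr_eigvec_def)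
  qed
qed

lemma Mthr_eigvec_diag_nonzero:
  assumes pos: "\<forall>x\<in>set a. x \<ge> 1" and w: "w < nverts a"
  shows "Mthr_eigvec a w w \<noteq> 0"
  using asz_pos[OF pos bag_bounds(1)[OF w]]
  by (auto simp: Mthr_eigvec_def bag_lift_def bag_contrast_def quot_eigvec_def quot_base_def quot_step_def)

lemma char_poly_Mthr:
  assumes pos: "\<forall>x\<in>set a. x \<ge> 1"
  shows "char_poly (Mthr l a) = (\<Prod>w\<leftarrow>[0..<nverts a]. [:- Mthr_eigval l a w, 1:])"
proof (rule char_poly_eq_prod_if_orthogonal_eigenvectors)
  show "Mthr l a \<in> carrier_mat (nverts a) (nverts a)" by (simp add: Mthr_def)
  fix w assume w: "w < nverts a"
  show "vec (nverts a) (Mthr_eigvec a w) \<in> carrier_vec (nverts a)" by simp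
  show "Mthr l a *\<^sub>v vec (nverts a) (Mthr_eigvec a w) = Mthr_eigval l a w \<cdot>\<^sub>v vec (nverts a) (Mthr_eigvec a w)"
    by (rule Mthr_eigvec_eigen[OF pos w])
  show "vec (nverts a) (Mthr_eigvec a w) \<bullet> vec (nverts a) (Mthr_eigvec a w') = 0"
    if "w' < nverts a" "w \<noteq> w'" for w'
    using Mthr_eigvec_orth[OF pos w that] by (simp add: scalar_prod_def atLeast0LessThan)
  have "(\<Sum>v<nverts a. Mthr_eigvec a w v * Mthr_eigvec a w v) \<noteq> 0"
    using Mthr_eigvec_diag_nonzero[OF pos w] w by (subst sum_nonneg_eq_0_iff) auto
  then show "vec (nverts a) (Mthr_eigvec a w) \<bullet> vec (nverts a) (Mthr_eigvec a w) \<noteq> 0"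
    by (simp add: scalar_prod_def atLeast0LessThan)
qed

section \<open>Multiplicities\<close>

lemma Mthr_eigval_on_bag:
  assumes i: "i \<in> {1..length a}" and v: "v \<in> bag_verts a i"
  shows "Mthr_eigval l a v
    = l * (if v = bag_start a (i - 1) then quot_eigval (length a) i else contrast_eigval i)"
proof -
  have "bag a v = i" by (rule bag_eqI[OF i v])
  thus ?thesis using v by (auto simp: Mthr_eigval_def bag_offset_def bag_verts_def)
qed

lemma count_Mthr_eigval_on_bag:
  assumes pos: "\<forall>x\<in>set a. x \<ge> 1" and i: "i \<in> {1..length a}"
  shows "(\<Sum>v\<in>bag_verts a i. of_bool (Mthr_eigval l a v = x))
    = of_bool (l * quot_eigval (length a) i = x) + (a ! (i - 1) - 1) * of_bool (l * contrast_eigval i = x)"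
proof -
  let ?s = "bag_start a (i - 1)" and ?rest = "{Suc (bag_start a (i - 1))..<bag_start a i}"
  have "i - 1 < length a" using i by auto
  hence "card (bag_verts a i) \<ge> 1"
    using pos nth_mem i by (simp add: card_bag_verts)
  hence split: "bag_verts a i = insert ?s ?rest" and card_rest: "card ?rest = a ! (i - 1) - 1"
    using card_bag_verts[OF i] by (auto simp: bag_verts_def)
  have "(\<Sum>v\<in>bag_verts a i. of_bool (Mthr_eigval l a v = x))
      = of_bool (Mthr_eigval l a ?s = x) + (\<Sum>v\<in>?rest. of_bool (Mthr_eigval l a v = x))"
    unfolding split by (subst sum.insert) auto
  also have "Mthr_eigval l a ?s = l * quot_eigval (length a) i"
    using Mthr_eigval_on_bag[OF i, of ?s] split by simp
  also have "(\<Sum>v\<in>?rest. of_bool (Mthr_eigval l a v = x))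
      = (\<Sum>v\<in>?rest. of_bool (l * contrast_eigval i = x) :: nat)"
    using i split by (intro sum.cong refl) (simp add: Mthr_eigval_on_bag)
  finally show ?thesis using card_rest by simp
qed

lemma order_char_poly_Mthr:
  assumes pos: "\<forall>x\<in>set a. x \<ge> 1"
  shows "order x (char_poly (Mthr l a))
    = card {i \<in> {1..length a}. l * quot_eigval (length a) i = x}
      + (\<Sum>i \<in> {i \<in> {1..length a}. l * contrast_eigval i = x}. a ! (i - 1) - 1)"
proof -
  have "order x (char_poly (Mthr l a)) = card {w. w < nverts a \<and> Mthr_eigval l a w = x}"
    by (simp add: char_poly_Mthr[OF pos] order_prod_linear_factors)
  also have "\<dots> = (\<Sum>w<nverts a. of_bool (Mthr_eigval l a w = x))"
    by (simp add: sum_of_bool_eq Int_def)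
  also have "\<dots> = (\<Sum>i\<in>{1..length a}. of_bool (l * quot_eigval (length a) i = x)
      + (a ! (i - 1) - 1) * of_bool (l * contrast_eigval i = x))"
    unfolding sum_by_bags by (intro sum.cong refl) (rule count_Mthr_eigval_on_bag[OF pos])
  also have "\<dots> = card {i \<in> {1..length a}. l * quot_eigval (length a) i = x}
      + (\<Sum>i \<in> {i \<in> {1..length a}. l * contrast_eigval i = x}. a ! (i - 1) - 1)"
    unfolding card_eq_sum sum.inter_filter[OF finite_atLeastAtMost] sum.distrib
    by (intro arg_cong2[where f = "(+)"] sum.cong) auto
  finally show ?thesis .
qed

lemma card_quot_eigval:
  assumes "1 \<le> r"
  shows "card {i \<in> {1..r}. quot_eigval r i = c} =
    (if c = -1 then (if r mod 4 = 0 \<or> r mod 4 = 1 then r div 4 else r div 4 + 1)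
     else if c = 0 then (if r mod 4 = 1 then r div 4 + 1 else r div 4)
     else if c = 1 then (if r mod 4 = 0 \<or> r mod 4 = 1 then r div 4
                         else if r mod 4 = 2 then r div 4 + 1 else r div 4 + 2)
     else if c = 2 then r div 4
     else 0)"
proof -
  define res where "res \<rho> = {i \<in> {1..r}. i mod 4 = \<rho> mod 4}" for \<rho> :: nat
  have card_res: "card (res \<rho>) = r div 4 + (if \<rho> \<le> r mod 4 then 1 else 0)" if "\<rho> \<in> {1..4}" for \<rho>
    unfolding res_def by (rule card_residue_mod_4[OF that])
  have r_mod: "r mod 4 = 0 \<or> r mod 4 = 1 \<or> r mod 4 = 2 \<or> r mod 4 = 3" by arith
  consider "c = -1" | "c = 0" | "c = 1" | "c = 2" | "c \<notin> {-1, 0, 1, 2}" by blast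
  then show ?thesis
  proof cases
    case 1
    have "{i \<in> {1..r}. quot_eigval r i = c} = res 2"
      using 1 by (auto simp: quot_eigval_eq_iff res_def)
    then have "card {i \<in> {1..r}. quot_eigval r i = c} = r div 4 + (if 2 \<le> r mod 4 then 1 else 0)"
      using card_res[of 2] by simp
    then show ?thesis using 1 r_mod by auto
  next
    case 2
    have "{i \<in> {1..r}. quot_eigval r i = c} = (if r mod 4 = 2 \<or> r mod 4 = 3 then res 1 - {1} else res 1)"
      using 2 by (auto simp: quot_eigval_eq_iff res_def)
    moreover have "1 \<in> res 1" using assms by (simp add: res_def)
    ultimately have "card {i \<in> {1..r}. quot_eigval r i = c}
        = (if r mod 4 = 2 \<or> r mod 4 = 3 then card (res 1) - 1 else card (res 1))"
      by simp
    then show ?thesis using 2 card_res[of 1] r_mod by auto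
  next
    case 3
    have "{i \<in> {1..r}. quot_eigval r i = c} = (if r mod 4 = 2 \<or> r mod 4 = 3 then insert 1 (res 3) else res 3)"
      using 3 assms by (auto simp: quot_eigval_eq_iff res_def)
    moreover have "1 \<notin> res 3" "finite (res 3)" by (simp_all add: res_def)
    ultimately have "card {i \<in> {1..r}. quot_eigval r i = c}
        = (if r mod 4 = 2 \<or> r mod 4 = 3 then card (res 3) + 1 else card (res 3))"
      by simp
    then show ?thesis using 3 card_res[of 3] r_mod by auto
  next
    case 4
    have "{i \<in> {1..r}. quot_eigval r i = c} = res 4"
      using 4 by (auto simp: quot_eigval_eq_iff res_def)
    then have "card {i \<in> {1..r}. quot_eigval r i = c} = r div 4"
      using card_res[of 4] by simp
    then show ?thesis using 4 by simp
  next
    case 5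
    hence "{i \<in> {1..r}. quot_eigval r i = c} = {}" by (auto simp: quot_eigval_eq_iff)
    then show ?thesis using 5 by auto
  qed
qed

lemma order_char_poly_Mthr_spectrum:
  fixes l :: real and a :: "nat list"
  assumes "l \<noteq> 0" and "length a \<ge> 1" and "\<forall>x\<in>set a. x \<ge> 1"
  defines "r \<equiv> length a"
  defines "k \<equiv> r div 4" and "q \<equiv> r mod 4"
  defines "A \<equiv> (\<Sum>i\<in>{i\<in>{1..r}. i mod 4 = 0 \<or> i mod 4 = 1}. a ! (i - 1) - 1)"
  defines "B \<equiv> (\<Sum>i\<in>{i\<in>{1..r}. i mod 4 = 2 \<or> i mod 4 = 3}. a ! (i - 1) - 1)"
  shows "order x (char_poly (Mthr l a)) =
       (if x = - l then (if q = 0 \<or> q = 1 then k else k + 1)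
        else if x = 0 then (if q = 1 then A + k + 1 else A + k)
        else if x = l then (if q = 0 \<or> q = 1 then B + k else if q = 2 then B + k + 1 else B + k + 2)
        else if x = 2 * l then k
        else 0)"
proof -
  note l = assms(1) and pos = assms(3)
  define c where "c = x / l"
  have x: "x = l * c" using l by (simp add: c_def)
  have "order x (char_poly (Mthr l a))
      = card {i \<in> {1..r}. quot_eigval r i = c}
        + (\<Sum>i\<in>{i \<in> {1..r}. contrast_eigval i = c}. a ! (i - 1) - 1)"
    using order_char_poly_Mthr[OF pos, of x l] l by (simp add: x r_def)
  moreover have "(\<Sum>i\<in>{i \<in> {1..r}. contrast_eigval i = c}. a ! (i - 1) - 1)
      = (if c = 0 then A else if c = 1 then B else 0)"
    by (simp add: contrast_eigval_eq_iff A_def B_def)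
  moreover have "x = - l \<longleftrightarrow> c = -1" "x = 0 \<longleftrightarrow> c = 0" "x = l \<longleftrightarrow> c = 1" "x = 2 * l \<longleftrightarrow> c = 2"
    using l by (auto simp: c_def field_simps)
  ultimately show ?thesis
    using card_quot_eigval[of r c] assms(2) by (simp add: r_def k_def q_def)
qed

theorem mainTheorem7:
  fixes l :: real and a :: "nat list"
  assumes "l \<noteq> 0" and "length a \<ge> 1" and "\<forall>x\<in>set a. x \<ge> 1"
  defines "r \<equiv> length a"
  defines "k \<equiv> r div 4" and "q \<equiv> r mod 4"
  defines "A \<equiv> (\<Sum>i\<in>{i\<in>{1..r}. i mod 4 = 0 \<or> i mod 4 = 1}. a ! (i - 1) - 1)"
  defines "B \<equiv> (\<Sum>i\<in>{i\<in>{1..r}. i mod 4 = 2 \<or> i mod 4 = 3}. a ! (i - 1) - 1)"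
  shows "in_S (nverts a) (thr_adj a) (Mthr l a) \<and>
    (\<forall>x. order x (char_poly (Mthr l a)) =
       (if x = - l then (if q = 0 \<or> q = 1 then k else k + 1)
        else if x = 0 then (if q = 1 then A + k + 1 else A + k)
        else if x = l then (if q = 0 \<or> q = 1 then B + k else if q = 2 then B + k + 1 else B + k + 2)
        else if x = 2 * l then k
        else 0))"
  using Mthr_in_S[OF assms(3,1)] order_char_poly_Mthr_spectrum[OF assms(1-3)]
  unfolding r_def k_def q_def A_def B_def by blast

end
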